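(* Let $f_1,f_2$ be strongly hyperbolic functions, $a_0>0$, $b_0,c_0\in\mathbb{R}$, $C=\overline{f_{a_0,b_0,c_0}}$ and $p=(-b_0,\infty)$. Let $q\in\mathcal{P}$ with $q\notin C$ and $q$ not parallel to $p$. Then there exist $a_1>0$, $b_1,c_1\in\mathbb{R}$ such that $D=\overline{f_{a_1,b_1,c_1}}$ contains $p$ and $q$ and $C\cap D=\{p\}$.
   Context: Identify $\mathbb{S}^1$ with $\mathbb{R}\cup\{\infty\}$, $\mathcal{P}=\mathbb{S}^1\times\mathbb{S}^1$, $\mathbb{R}^+=(0,\infty)$. Two points of $\mathcal{P}$ are parallel if they have the same first coordinate or the same second coordinate. A function $f:\mathbb{R}^+\to\mathbb{R}^+$ is strongly hyperbolic if: (1) $\lim_{x\to0+}f(x)=+\infty$, $\lim_{x\to+\infty}f(x)=0$; (2) $f$ strictly convex; (3) $\lim_{x\to+\infty}f(x+b)/f(x)=1$ for each $b\in\mathbb{R}$; (4) $f$ differentiable; (5) $\ln|f'|$ strictly convex. For $a>0$, $b,c\in\mathbb{R}$: $f_{a,b,c}(x)=af_1(x+b)+c$ for $x>-b$, $f_{a,b,c}(x)=-af_2(-x-b)+c$ for $x<-b$; $\overline{f_{a,b,c}}=\{(x,f_{a,b,c}(x)):x\ne-b\}\cup\{(-b,\infty),(\infty,c)\}$. *)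

theory Defs
  imports "HOL-Analysis.Analysis"
begin

text \<open>The circle S^1 identified with R together with one point at infinity.\<close>
datatype circ = Fin real | Infty

type_synonym point = "circ \<times> circ"

definition parallel :: "point \<Rightarrow> point \<Rightarrow> bool" where
  "parallel p q \<longleftrightarrow> fst p = fst q \<or> snd p = snd q"

definition strictly_convex_on :: "real set \<Rightarrow> (real \<Rightarrow> real) \<Rightarrow> bool" where
  "strictly_convex_on S f \<longleftrightarrow>
     (\<forall>x\<in>S. \<forall>y\<in>S. \<forall>t. x \<noteq> y \<and> 0 < t \<and> t < 1 \<longrightarrow>
        f ((1 - t) * x + t * y) < (1 - t) * f x + t * f y)"

text \<open>Strongly hyperbolic functions R+ -> R+ (only values on (0,inf) matter).\<close>
definition strongly_hyperbolic :: "(real \<Rightarrow> real) \<Rightarrow> bool" where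
  "strongly_hyperbolic f \<longleftrightarrow>
     (\<forall>x>0. f x > 0) \<and>
     filterlim f at_top (at_right 0) \<and>
     (f \<longlongrightarrow> 0) at_top \<and>
     strictly_convex_on {0<..} f \<and>
     (\<forall>b::real. ((\<lambda>x. f (x + b) / f x) \<longlongrightarrow> 1) at_top) \<and>
     (\<forall>x>0. f differentiable (at x)) \<and>
     strictly_convex_on {0<..} (\<lambda>x. ln \<bar>deriv f x\<bar>)"

definition fabc :: "(real \<Rightarrow> real) \<Rightarrow> (real \<Rightarrow> real) \<Rightarrow> real \<Rightarrow> real \<Rightarrow> real \<Rightarrow> real \<Rightarrow> real" where
  "fabc f1 f2 a b c x =
     (if x > - b then a * f1 (x + b) + c else - a * f2 (- x - b) + c)"

definition fabc_closure :: "(real \<Rightarrow> real) \<Rightarrow> (real \<Rightarrow> real) \<Rightarrow> real \<Rightarrow> real \<Rightarrow> real \<Rightarrow> point set" where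
  "fabc_closure f1 f2 a b c =
     {(Fin x, Fin (fabc f1 f2 a b c x)) | x. x \<noteq> - b} \<union> {(Fin (- b), Infty), (Infty, Fin c)}"

end

theory Submission
  imports Defs
begin

text \<open>Changing c0 to c0 + d translates C vertically by d. Two different vertical
  translates of a graph are disjoint, so they meet only in their common point
  p = (-b0, \<infinity>), while every point not parallel to p lies on some translate; if it is
  not on C, that translate is the required D.\<close>

lemma fabc_add_const: "fabc f1 f2 a b (c + d) x = fabc f1 f2 a b c x + d"
  unfolding fabc_def by simp

lemma fabc_closure_pole: "(Fin (- b), Infty) \<in> fabc_closure f1 f2 a b c"
  unfolding fabc_closure_def by simp

lemma fabc_closure_Int_add_const:
  assumes "d \<noteq> 0"
  shows "fabc_closure f1 f2 a b c \<inter> fabc_closure f1 f2 a b (c + d) = {(Fin (- b), Infty)}"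
  using assms unfolding fabc_closure_def by (auto simp: fabc_add_const)

lemma fabc_closure_add_const_through:
  assumes "\<not> parallel q (Fin (- b), Infty)"
  obtains d where "q \<in> fabc_closure f1 f2 a b (c + d)"
proof -
  obtain u v where "q = (u, v)" and u: "u \<noteq> Fin (- b)" and "v \<noteq> Infty"
    using assms by (cases q) (auto simp: parallel_def)
  then obtain y where q: "q = (u, Fin y)"
    by (cases v) auto
  show thesis
  proof (cases u)
    case Infty
    then have "q \<in> fabc_closure f1 f2 a b (c + (y - c))"
      using q unfolding fabc_closure_def by simp
    then show thesis by (rule that)
  next
    case (Fin x)
    then have "q \<in> fabc_closure f1 f2 a b (c + (y - fabc f1 f2 a b c x))"
      using q u unfolding fabc_closure_def by (auto simp: fabc_add_const)
    then show thesis by (rule that)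
  qed
qed

theorem lemma4p10:
  fixes f1 f2 :: "real \<Rightarrow> real" and a0 b0 c0 :: real and q :: point
  assumes "strongly_hyperbolic f1" and "strongly_hyperbolic f2"
    and "a0 > 0"
    and "q \<notin> fabc_closure f1 f2 a0 b0 c0"
    and "\<not> parallel q (Fin (- b0), Infty)"
  shows "\<exists>a1 b1 c1. a1 > 0 \<and>
           (Fin (- b0), Infty) \<in> fabc_closure f1 f2 a1 b1 c1 \<and>
           q \<in> fabc_closure f1 f2 a1 b1 c1 \<and>
           fabc_closure f1 f2 a0 b0 c0 \<inter> fabc_closure f1 f2 a1 b1 c1 = {(Fin (- b0), Infty)}"
proof -
  obtain d where q_on_D: "q \<in> fabc_closure f1 f2 a0 b0 (c0 + d)"
    using fabc_closure_add_const_through assms(5) .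
  have "d \<noteq> 0"
    using q_on_D assms(4) by auto
  then show ?thesis
    using assms(3) q_on_D fabc_closure_pole fabc_closure_Int_add_const by blast
qed

end
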